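(* Modularity is rich: for every finite set $V$ with $|V|\ge 2$ and every partition $C^*$ of $V$, there exist edge weights $E$ such that, for the graph $G=(V,E)$, the modularity $Q_{\mathrm{mod}}(G,C)$ is defined for every clustering $C$ of $G$ and $C^*$ is the unique clustering of $G$ maximizing $Q_{\mathrm{mod}}(G,\cdot)$.
   Context: A (symmetric weighted) graph is a pair $G=(V,E)$ of a finite set $V$ of nodes and a function $E:V\times V\to\mathbb{R}_{\ge 0}$ with $E(i,j)=E(j,i)$; self loops ($E(i,i)>0$) are allowed. A clustering of $G$ is a partition of $V$ into nonempty, pairwise disjoint sets (clusters). For $c\subseteq V$ define the volume $v_c=\sum_{i\in c}\sum_{j\in V}E(i,j)$ and the within-cluster weight $w_c=\sum_{i\in c}\sum_{j\in c}E(i,j)$; $v_V$ is the volume of the whole graph. Modularity is $Q_{\mathrm{mod}}(G,C)=\sum_{c\in C}\left(\frac{w_c}{v_V}-\left(\frac{v_c}{v_V}\right)^2\right)$, defined when $v_V>0$. *)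

theory Defs
  imports Main "HOL-Analysis.Analysis"
begin

definition is_graph :: "'a set \<Rightarrow> ('a \<Rightarrow> 'a \<Rightarrow> real) \<Rightarrow> bool" where
  "is_graph V E \<longleftrightarrow> finite V \<and> (\<forall>i\<in>V. \<forall>j\<in>V. E i j \<ge> 0 \<and> E i j = E j i)"

definition is_clustering :: "'a set \<Rightarrow> 'a set set \<Rightarrow> bool" where
  "is_clustering V C \<longleftrightarrow> \<Union>C = V \<and> (\<forall>c\<in>C. c \<noteq> {}) \<and>
     (\<forall>c\<in>C. \<forall>d\<in>C. c \<noteq> d \<longrightarrow> c \<inter> d = {})"

definition graph_volume :: "'a set \<Rightarrow> ('a \<Rightarrow> 'a \<Rightarrow> real) \<Rightarrow> 'a set \<Rightarrow> real" where
  "graph_volume V E c = (\<Sum>i\<in>c. \<Sum>j\<in>V. E i j)"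

definition within_weight :: "('a \<Rightarrow> 'a \<Rightarrow> real) \<Rightarrow> 'a set \<Rightarrow> real" where
  "within_weight E c = (\<Sum>i\<in>c. \<Sum>j\<in>c. E i j)"

text \<open>Modularity (meaningful only when graph_volume V E V > 0).\<close>
definition modularity :: "'a set \<Rightarrow> ('a \<Rightarrow> 'a \<Rightarrow> real) \<Rightarrow> 'a set set \<Rightarrow> real" where
  "modularity V E C = (\<Sum>c\<in>C. within_weight E c / graph_volume V E V - (graph_volume V E c / graph_volume V E V)^2)"

end

theory Submission
  imports Defs
begin

text \<open>Modularity is a sum, over all ordered pairs of nodes in a common cluster, of the entries
  B i j = E i j / m - d i * d j / m^2 of the modularity matrix (d the degrees, m the volume).
  If B is positive on the distinct pairs that C* puts together and negative on the pairs it
  separates, every other clustering gains only negative terms or loses positive ones, so C* is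
  the unique maximiser. Such weights are given by joining any two distinct nodes of a common
  cluster of C* by an edge of weight 1: nodes of a cluster of size K have degree K - 1, while
  the volume is at least K (K - 1) > (K - 1)^2.\<close>

definition same_cluster :: "'a set set \<Rightarrow> 'a \<Rightarrow> 'a \<Rightarrow> bool" where
  "same_cluster C i j \<longleftrightarrow> (\<exists>c\<in>C. i \<in> c \<and> j \<in> c)"

lemma clustering_subset: "is_clustering V C \<Longrightarrow> c \<in> C \<Longrightarrow> c \<subseteq> V"
  unfolding is_clustering_def by blast

lemma clustering_cluster_unique:
  "is_clustering V C \<Longrightarrow> c \<in> C \<Longrightarrow> d \<in> C \<Longrightarrow> x \<in> c \<Longrightarrow> x \<in> d \<Longrightarrow> c = d"
  unfolding is_clustering_def by blast

lemma clustering_obtain_cluster: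
  assumes "is_clustering V C" "i \<in> V"
  obtains c where "c \<in> C" "i \<in> c"
  using assms unfolding is_clustering_def by blast

lemma same_cluster_refl: "is_clustering V C \<Longrightarrow> i \<in> V \<Longrightarrow> same_cluster C i i"
  unfolding same_cluster_def by (blast elim: clustering_obtain_cluster)

lemma same_cluster_sym: "same_cluster C i j \<longleftrightarrow> same_cluster C j i"
  unfolding same_cluster_def by blast

lemma same_cluster_iff_mem:
  "is_clustering V C \<Longrightarrow> c \<in> C \<Longrightarrow> i \<in> c \<Longrightarrow> same_cluster C i j \<longleftrightarrow> j \<in> c"
  unfolding same_cluster_def by (blast dest: clustering_cluster_unique)

lemma clustering_eqI:
  assumes C: "is_clustering V C" and D: "is_clustering V D"
    and same: "\<And>i j. i \<in> V \<Longrightarrow> j \<in> V \<Longrightarrow> same_cluster C i j \<longleftrightarrow> same_cluster D i j"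
  shows "C = D"
proof -
  have "C \<subseteq> D" if C: "is_clustering V C" and D: "is_clustering V D"
    and same: "\<And>i j. i \<in> V \<Longrightarrow> j \<in> V \<Longrightarrow> same_cluster C i j \<longleftrightarrow> same_cluster D i j"
    for C D
  proof
    fix c assume c: "c \<in> C"
    then obtain i where i: "i \<in> c" using C unfolding is_clustering_def by blast
    with c C have iV: "i \<in> V" by (auto dest: clustering_subset)
    obtain d where d: "d \<in> D" "i \<in> d" using clustering_obtain_cluster[OF D iV] by blast
    have "c = {j \<in> V. same_cluster C i j}"
      using clustering_subset[OF C c] same_cluster_iff_mem[OF C c i] by blast
    also have "\<dots> = {j \<in> V. same_cluster D i j}" using same[OF iV] by blast
    also have "\<dots> = d"
      using clustering_subset[OF D d(1)] same_cluster_iff_mem[OF D d] by blast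
    finally show "c \<in> D" using d by simp
  qed
  from this[OF C D same] this[OF D C] same show ?thesis by blast
qed

lemma sum_clustering:
  assumes "finite V" "is_clustering V C"
  shows "(\<Sum>c\<in>C. sum f c) = sum f V"
proof -
  have "\<forall>c\<in>C. finite c" using assms by (meson clustering_subset finite_subset)
  moreover have "\<forall>c\<in>C. \<forall>d\<in>C. c \<noteq> d \<longrightarrow> c \<inter> d = {}"
    using assms(2) unfolding is_clustering_def by blast
  ultimately have "sum f (\<Union>C) = (\<Sum>c\<in>C. sum f c)" by (simp add: sum.Union_disjoint)
  with assms(2) show ?thesis unfolding is_clustering_def by simp
qed

lemma sum_cluster_eq_sum_same_cluster:
  assumes "finite V" "is_clustering V C" "c \<in> C" "i \<in> c"
  shows "sum f c = (\<Sum>j\<in>V. if same_cluster C i j then f j else 0)"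
proof -
  have "sum f c = sum f (V \<inter> c)" using clustering_subset[OF assms(2,3)] by (simp add: Int_absorb1)
  also have "\<dots> = (\<Sum>j\<in>V. if j \<in> c then f j else 0)" using assms(1) by (rule sum.inter_restrict)
  finally show ?thesis using same_cluster_iff_mem[OF assms(2-4)] by simp
qed

definition node_degree :: "'a set \<Rightarrow> ('a \<Rightarrow> 'a \<Rightarrow> real) \<Rightarrow> 'a \<Rightarrow> real" where
  "node_degree V E i = (\<Sum>j\<in>V. E i j)"

definition modularity_matrix :: "'a set \<Rightarrow> ('a \<Rightarrow> 'a \<Rightarrow> real) \<Rightarrow> 'a \<Rightarrow> 'a \<Rightarrow> real" where
  "modularity_matrix V E i j =
     E i j / graph_volume V E V - node_degree V E i * node_degree V E j / (graph_volume V E V)\<^sup>2"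

lemma graph_volume_eq_sum_node_degree: "graph_volume V E c = (\<Sum>i\<in>c. node_degree V E i)"
  unfolding graph_volume_def node_degree_def ..

lemma modularity_matrix_eq:
  "graph_volume V E V \<noteq> 0 \<Longrightarrow> modularity_matrix V E i j =
     (E i j * graph_volume V E V - node_degree V E i * node_degree V E j) / (graph_volume V E V)\<^sup>2"
  unfolding modularity_matrix_def by (simp add: field_simps power2_eq_square)

lemma modularity_eq_sum_same_cluster:
  assumes fin: "finite V" and C: "is_clustering V C"
  shows "modularity V E C =
    (\<Sum>i\<in>V. \<Sum>j\<in>V. if same_cluster C i j then modularity_matrix V E i j else 0)"
proof -
  let ?m = "graph_volume V E V" and ?d = "node_degree V E" and ?B = "modularity_matrix V E"
  have "within_weight E c / ?m - (graph_volume V E c / ?m)\<^sup>2 = (\<Sum>i\<in>c. \<Sum>j\<in>c. ?B i j)" for c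
  proof -
    have "(graph_volume V E c)\<^sup>2 = (\<Sum>i\<in>c. \<Sum>j\<in>c. ?d i * ?d j)"
      by (simp add: graph_volume_eq_sum_node_degree power2_eq_square sum_product)
    then show ?thesis
      by (simp add: within_weight_def modularity_matrix_def power_divide
          sum_subtractf sum_divide_distrib)
  qed
  then have "modularity V E C = (\<Sum>c\<in>C. \<Sum>i\<in>c. \<Sum>j\<in>c. ?B i j)"
    unfolding modularity_def by simp
  also have "\<dots> = (\<Sum>c\<in>C. \<Sum>i\<in>c. \<Sum>j\<in>V. if same_cluster C i j then ?B i j else 0)"
    by (rule sum.cong[OF refl], rule sum.cong[OF refl], rule sum_cluster_eq_sum_same_cluster[OF fin C])
  also have "\<dots> = (\<Sum>i\<in>V. \<Sum>j\<in>V. if same_cluster C i j then ?B i j else 0)"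
    by (rule sum_clustering[OF fin C])
  finally show ?thesis .
qed

lemma sum_same_cluster_unique_max:
  fixes B :: "'a \<Rightarrow> 'a \<Rightarrow> real"
  assumes fin: "finite V" and C: "is_clustering V C" and Cs: "is_clustering V Cs" and "C \<noteq> Cs"
    and pos: "\<And>i j. i \<in> V \<Longrightarrow> j \<in> V \<Longrightarrow> i \<noteq> j \<Longrightarrow> same_cluster Cs i j \<Longrightarrow> B i j > 0"
    and neg: "\<And>i j. i \<in> V \<Longrightarrow> j \<in> V \<Longrightarrow> \<not> same_cluster Cs i j \<Longrightarrow> B i j < 0"
  shows "(\<Sum>i\<in>V. \<Sum>j\<in>V. if same_cluster C i j then B i j else 0)
       < (\<Sum>i\<in>V. \<Sum>j\<in>V. if same_cluster Cs i j then B i j else 0)"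
proof -
  define f where "f = (\<lambda>(i, j). if same_cluster C i j then B i j else 0)"
  define g where "g = (\<lambda>(i, j). if same_cluster Cs i j then B i j else 0)"
  have f_le_g: "f (i, j) \<le> g (i, j)"
    and f_less_g: "same_cluster C i j \<noteq> same_cluster Cs i j \<Longrightarrow> f (i, j) < g (i, j)"
    if "i \<in> V" "j \<in> V" for i j
  proof -
    have "i \<noteq> j" if "same_cluster C i j \<noteq> same_cluster Cs i j"
      using that same_cluster_refl[OF C \<open>i \<in> V\<close>] same_cluster_refl[OF Cs \<open>i \<in> V\<close>] by blast
    then show "f (i, j) \<le> g (i, j)"
      "same_cluster C i j \<noteq> same_cluster Cs i j \<Longrightarrow> f (i, j) < g (i, j)"
      using pos[of i j] neg[of i j] \<open>i \<in> V\<close> \<open>j \<in> V\<close> by (auto simp: f_def g_def)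
  qed
  obtain i j where ij: "i \<in> V" "j \<in> V" "same_cluster C i j \<noteq> same_cluster Cs i j"
    using clustering_eqI[OF C Cs] \<open>C \<noteq> Cs\<close> by blast
  have "f (i, j) < g (i, j)" using f_less_g[OF ij] .
  then have "sum f (V \<times> V) < sum g (V \<times> V)"
    using fin ij(1,2) f_le_g by (intro sum_strict_mono_ex1) auto
  then show ?thesis by (simp add: sum.cartesian_product f_def g_def)
qed

text \<open>Singleton clusters get a self-loop, so that every node has positive degree.\<close>

definition cluster_graph :: "'a set set \<Rightarrow> 'a \<Rightarrow> 'a \<Rightarrow> real" where
  "cluster_graph C i j = (if same_cluster C i j \<and> (i \<noteq> j \<or> {i} \<in> C) then 1 else 0)"

lemma is_graph_cluster_graph: "finite V \<Longrightarrow> is_graph V (cluster_graph C)"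
  unfolding is_graph_def cluster_graph_def by (auto simp: same_cluster_sym)

lemma node_degree_cluster_graph_ge_1:
  assumes fin: "finite V" and C: "is_clustering V C" and i: "i \<in> V"
  shows "node_degree V (cluster_graph C) i \<ge> 1"
proof -
  obtain c where c: "c \<in> C" "i \<in> c" using C i by (rule clustering_obtain_cluster)
  obtain j where j: "j \<in> c" "j \<noteq> i \<or> c = {i}" using c(2) by blast
  have jV: "j \<in> V" using clustering_subset[OF C c(1)] j(1) by blast
  have "1 = cluster_graph C i j"
    using c j unfolding cluster_graph_def same_cluster_def by auto
  also have "\<dots> \<le> node_degree V (cluster_graph C) i"
    unfolding node_degree_def by (rule member_le_sum) (use jV fin in \<open>auto simp: cluster_graph_def\<close>)
  finally show ?thesis .
qed

lemma node_degree_cluster_graph: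
  assumes fin: "finite V" and C: "is_clustering V C" and c: "c \<in> C" "card c \<ge> 2" and i: "i \<in> c"
  shows "node_degree V (cluster_graph C) i = real (card c) - 1"
proof -
  have "{i} \<notin> C" using clustering_cluster_unique[OF C c(1) _ i, of "{i}"] c(2) by auto
  then have "cluster_graph C i j = (if j \<in> c - {i} then 1 else 0)" for j
    using same_cluster_iff_mem[OF C c(1) i] unfolding cluster_graph_def by auto
  then have "node_degree V (cluster_graph C) i = (\<Sum>j\<in>V. if j \<in> c - {i} then 1 else 0)"
    unfolding node_degree_def by presburger
  also have "\<dots> = (\<Sum>j\<in>V \<inter> (c - {i}). 1)" using fin by (rule sum.inter_restrict[symmetric])
  also have "V \<inter> (c - {i}) = c - {i}" using clustering_subset[OF C c(1)] by blast
  finally show ?thesis using i c(2) by (simp add: card_Diff_singleton of_nat_diff)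
qed

lemma graph_volume_cluster_graph_ge:
  assumes fin: "finite V" and C: "is_clustering V C" and c: "c \<in> C" "card c \<ge> 2"
  shows "real (card c) * (real (card c) - 1) \<le> graph_volume V (cluster_graph C) V"
proof -
  have "real (card c) * (real (card c) - 1) = (\<Sum>l\<in>c. node_degree V (cluster_graph C) l)"
    using node_degree_cluster_graph[OF fin C c] by simp
  also have "\<dots> \<le> (\<Sum>l\<in>V. node_degree V (cluster_graph C) l)"
    by (rule sum_mono2[OF fin clustering_subset[OF C c(1)]])
      (auto simp: node_degree_def cluster_graph_def intro: sum_nonneg)
  finally show ?thesis by (simp add: graph_volume_eq_sum_node_degree)
qed

lemma graph_volume_cluster_graph_pos:
  assumes "finite V" "is_clustering V C" "V \<noteq> {}"
  shows "graph_volume V (cluster_graph C) V > 0"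
  unfolding graph_volume_eq_sum_node_degree
  using assms node_degree_cluster_graph_ge_1[OF assms(1,2)]
  by (intro sum_pos) (auto intro: less_le_trans[OF zero_less_one])

lemma modularity_matrix_cluster_graph_pos:
  assumes fin: "finite V" and C: "is_clustering V C"
    and ij: "i \<in> V" "j \<in> V" "i \<noteq> j" "same_cluster C i j"
  shows "modularity_matrix V (cluster_graph C) i j > 0"
proof -
  let ?m = "graph_volume V (cluster_graph C) V"
  obtain c where c: "c \<in> C" "i \<in> c" "j \<in> c" using ij(4) unfolding same_cluster_def by blast
  have "card {i, j} \<le> card c"
    using c clustering_subset[OF C c(1)] fin by (intro card_mono) (auto intro: finite_subset)
  then have c2: "card c \<ge> 2" using ij(3) by simp
  define K where "K = real (card c)"
  have "K \<ge> 2" using c2 by (simp add: K_def)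
  then have "(K - 1) * (K - 1) < K * (K - 1)" by (simp add: algebra_simps)
  also have "K * (K - 1) \<le> ?m" unfolding K_def by (rule graph_volume_cluster_graph_ge[OF fin C c(1) c2])
  finally have "node_degree V (cluster_graph C) i * node_degree V (cluster_graph C) j < 1 * ?m"
    using node_degree_cluster_graph[OF fin C c(1) c2] c by (simp add: K_def)
  moreover have "cluster_graph C i j = 1" using ij unfolding cluster_graph_def by simp
  moreover have "?m > 0" using graph_volume_cluster_graph_pos[OF fin C] ij(1) by blast
  ultimately show ?thesis by (simp add: modularity_matrix_eq)
qed

lemma modularity_matrix_cluster_graph_neg:
  assumes fin: "finite V" and C: "is_clustering V C"
    and ij: "i \<in> V" "j \<in> V" "\<not> same_cluster C i j"
  shows "modularity_matrix V (cluster_graph C) i j < 0"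
proof -
  have "cluster_graph C i j = 0" using ij(3) unfolding cluster_graph_def by simp
  moreover have "node_degree V (cluster_graph C) i * node_degree V (cluster_graph C) j > 0"
    using node_degree_cluster_graph_ge_1[OF fin C] ij(1,2) by (auto intro: mult_pos_pos less_le_trans[OF zero_less_one])
  moreover have "graph_volume V (cluster_graph C) V > 0"
    using graph_volume_cluster_graph_pos[OF fin C] ij(1) by blast
  ultimately show ?thesis by (simp add: modularity_matrix_eq)
qed

theorem theorem1:
  fixes V :: "'a set" and Cstar :: "'a set set"
  assumes "finite V" and "card V \<ge> 2" and "is_clustering V Cstar"
  shows "\<exists>E. is_graph V E \<and> graph_volume V E V > 0 \<and>
           (\<forall>C. is_clustering V C \<and> C \<noteq> Cstar \<longrightarrow> modularity V E C < modularity V E Cstar)"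
proof (intro exI conjI allI impI)
  note fin = assms(1) and Cs = assms(3)
  let ?E = "cluster_graph Cstar"
  show "is_graph V ?E" using fin by (rule is_graph_cluster_graph)
  show "graph_volume V ?E V > 0"
    using graph_volume_cluster_graph_pos[OF fin Cs] assms(2) by fastforce
  fix C assume "is_clustering V C \<and> C \<noteq> Cstar"
  then have C: "is_clustering V C" and ne: "C \<noteq> Cstar" by auto
  show "modularity V ?E C < modularity V ?E Cstar"
    unfolding modularity_eq_sum_same_cluster[OF fin Cs] modularity_eq_sum_same_cluster[OF fin C]
    by (rule sum_same_cluster_unique_max[OF fin C Cs ne])
      (simp_all add: modularity_matrix_cluster_graph_pos[OF fin Cs]
        modularity_matrix_cluster_graph_neg[OF fin Cs])
qed

end
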